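(* In the public bug bounty model described in the context, define $\Omega_\infty(\hat\kappa)=\sum_lw^l\mu^lq^le^{-q^l\hat\kappa}-\underline c$ and let $\tilde\kappa$ be its unique root in $[0,\infty)$. Then the optimal asymptotic participation, i.e. the maximizer of $$W_\infty(\hat\kappa)=\sum_lw^l\mu^l\big(1-e^{-q^l\hat\kappa}\big)-\hat\kappa\underline c$$ over $\hat\kappa\in[0,\kappa_a(\overline v)]$, is $\hat\kappa^*=\min\{\tilde\kappa,\kappa_a(\overline v)\}$, and any prizes $\boldsymbol v^\infty$, $v_a^\infty$ and complexity $q_a^\infty$ (satisfying $\sum_lv^l+v_a\le\overline v$, $v^l\ge0$, $v_a\ge0$, $q_a\in[0,1]$) that solve $\hat\kappa^*=\Psi_\infty(\hat\kappa^*;\boldsymbol v,v_a,q_a)$ are optimal.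
   Context: Public bug bounty model (limit of $n\to\infty$ agents). There are $L$ potential organic bugs; bug $l$ exists with probability $\mu^l\in(0,1]$ (independently), has complexity $q^l\in(0,1]$, and the designer values finding it at $w^l\ge0$. Agents' costs are i.i.d. from a fixed continuous distribution $F$ with full support $[\underline c,\overline c]$, $0<\underline c<\overline c\le\infty$, finite density $f$, $F/f$ non-decreasing. The designer has budget $\overline v>0$ with $\overline v\ge\underline c$, and $\sum_lw^l\mu^lq^l\ge\underline c$. Prizes $v^l\ge0$ for organic bugs, one artificial bug with prize $v_a\ge0$ and complexity $q_a\in[0,1]$. $\Psi_\infty(\hat\kappa;\boldsymbol v,v_a,q_a)=\sum_lv^l\mu^l\frac{1-e^{-q^l\hat\kappa}}{\underline c}+v_a\frac{1-e^{-q_a\hat\kappa}}{\underline c}$; for given prizes, the asymptotic participation is $\kappa^*=\lim_{n\to\infty}nF(c_n)$, with $c_n$ the symmetric equilibrium threshold with $n$ agents, and equals the largest fixed point of $\Psi_\infty$ in $[0,\infty)$; the designer's asymptotic payoff is $W_\infty(\kappa^* )$. $\kappa_a(\overline v)$ is the largest fixed point in $[0,\infty)$ of $\hat\kappa\mapsto\overline v(1-e^{-\hat\kappa})/\underline c$, and the set of achievable participations is $[0,\kappa_a(\overline v)]$. *)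

theory Defs
  imports Complex_Main
begin

text \<open>Organic bugs are indexed by l < L, with existence probabilities mu l,
complexities q l and values w l. cl is the lower end of the cost support.\<close>

definition largest_fp :: "(real \<Rightarrow> real) \<Rightarrow> real" where
  "largest_fp g = (GREATEST k. 0 \<le> k \<and> g k = k)"

definition Psi_inf :: "nat \<Rightarrow> (nat \<Rightarrow> real) \<Rightarrow> (nat \<Rightarrow> real) \<Rightarrow> real
    \<Rightarrow> (nat \<Rightarrow> real) \<Rightarrow> real \<Rightarrow> real \<Rightarrow> real \<Rightarrow> real" where
  "Psi_inf L mu q cl v va qa k =
     (\<Sum>l<L. v l * mu l * (1 - exp (- q l * k)) / cl) + va * (1 - exp (- qa * k)) / cl"

text \<open>Asymptotic participation induced by prizes (v, va) and artificial complexity qa.\<close>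
definition kappa_inf :: "nat \<Rightarrow> (nat \<Rightarrow> real) \<Rightarrow> (nat \<Rightarrow> real) \<Rightarrow> real
    \<Rightarrow> (nat \<Rightarrow> real) \<Rightarrow> real \<Rightarrow> real \<Rightarrow> real" where
  "kappa_inf L mu q cl v va qa = largest_fp (Psi_inf L mu q cl v va qa)"

definition kappa_a :: "real \<Rightarrow> real \<Rightarrow> real" where
  "kappa_a vbar cl = largest_fp (\<lambda>k. vbar * (1 - exp (- k)) / cl)"

definition W_inf :: "nat \<Rightarrow> (nat \<Rightarrow> real) \<Rightarrow> (nat \<Rightarrow> real) \<Rightarrow> (nat \<Rightarrow> real)
    \<Rightarrow> real \<Rightarrow> real \<Rightarrow> real" where
  "W_inf L w mu q cl k = (\<Sum>l<L. w l * mu l * (1 - exp (- q l * k))) - k * cl"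

definition Omega_inf :: "nat \<Rightarrow> (nat \<Rightarrow> real) \<Rightarrow> (nat \<Rightarrow> real) \<Rightarrow> (nat \<Rightarrow> real)
    \<Rightarrow> real \<Rightarrow> real \<Rightarrow> real" where
  "Omega_inf L w mu q cl k = (\<Sum>l<L. w l * mu l * q l * exp (- q l * k)) - cl"

definition feasible :: "nat \<Rightarrow> real \<Rightarrow> (nat \<Rightarrow> real) \<Rightarrow> real \<Rightarrow> real \<Rightarrow> bool" where
  "feasible L vbar v va qa \<longleftrightarrow>
     (\<forall>l<L. 0 \<le> v l) \<and> 0 \<le> va \<and> 0 \<le> qa \<and> qa \<le> 1 \<and> (\<Sum>l<L. v l) + va \<le> vbar"

definition optimal_prizes :: "nat \<Rightarrow> (nat \<Rightarrow> real) \<Rightarrow> (nat \<Rightarrow> real) \<Rightarrow> (nat \<Rightarrow> real)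
    \<Rightarrow> real \<Rightarrow> real \<Rightarrow> (nat \<Rightarrow> real) \<Rightarrow> real \<Rightarrow> real \<Rightarrow> bool" where
  "optimal_prizes L w mu q cl vbar v va qa \<longleftrightarrow>
     feasible L vbar v va qa \<and>
     (\<forall>v' va' qa'. feasible L vbar v' va' qa' \<longrightarrow>
        W_inf L w mu q cl (kappa_inf L mu q cl v' va' qa')
          \<le> W_inf L w mu q cl (kappa_inf L mu q cl v va qa))"

end

theory Submission
  imports Defs "HOL-Analysis.Analysis"
begin

text \<open>Every admissible participation map lies below the one in which the whole budget is put on a
  single bug of complexity 1, so its largest fixed point is at most \<open>kappa_a\<close>. The payoff
  \<open>W_inf\<close> has the strictly decreasing derivative \<open>Omega_inf\<close>, hence increases up to
  its root and decreases after it; on \<open>[0, kappa_a]\<close> it is therefore maximised exactly at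
  \<open>min kt kappa_a\<close>, and any prizes inducing that participation are optimal.\<close>

lemma largest_fp:
  fixes g :: "real \<Rightarrow> real"
  assumes cont: "continuous_on UNIV g" and g0: "g 0 = 0"
    and bounded: "\<And>k. 0 \<le> k \<Longrightarrow> g k \<le> B"
  shows "0 \<le> largest_fp g" and "g (largest_fp g) = largest_fp g"
    and "\<And>k. 0 \<le> k \<Longrightarrow> g k = k \<Longrightarrow> k \<le> largest_fp g"
proof -
  define S where "S = {k. 0 \<le> k} \<inter> {k. g k = k}"
  have "closed S"
    unfolding S_def
    by (intro closed_Int closed_Collect_le closed_Collect_eq continuous_intros cont)
  moreover have "S \<noteq> {}" using g0 unfolding S_def by auto
  moreover have bdd: "bdd_above S"
    using bounded by (intro bdd_aboveI[of _ B]) (force simp: S_def)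
  ultimately have Sup_in: "Sup S \<in> S" by (rule closed_contains_Sup[rotated 2])
  have "largest_fp g = Sup S"
    unfolding largest_fp_def
    by (rule Greatest_equality) (use Sup_in cSup_upper[OF _ bdd] in \<open>auto simp: S_def\<close>)
  then show "0 \<le> largest_fp g" "g (largest_fp g) = largest_fp g"
    and "\<And>k. 0 \<le> k \<Longrightarrow> g k = k \<Longrightarrow> k \<le> largest_fp g"
    using Sup_in cSup_upper[OF _ bdd] unfolding S_def by auto
qed

lemma le_largest_fp:
  fixes g :: "real \<Rightarrow> real"
  assumes cont: "continuous_on UNIV g" and g0: "g 0 = 0"
    and bounded: "\<And>k. 0 \<le> k \<Longrightarrow> g k \<le> B"
    and k: "0 \<le> k" "k \<le> g k"
  shows "k \<le> largest_fp g"
proof -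
  have "k \<le> B" using k bounded[OF k(1)] by linarith
  have "\<exists>x\<ge>k. x \<le> B \<and> g x - x = 0"
  proof (rule IVT2[where f = "\<lambda>x. g x - x"])
    show "g B - B \<le> 0" using bounded[of B] \<open>k \<le> B\<close> k(1) by linarith
    show "\<forall>x. k \<le> x \<and> x \<le> B \<longrightarrow> isCont (\<lambda>x. g x - x) x"
      using cont by (auto intro!: continuous_intros simp: continuous_on_eq_continuous_at)
  qed (use k \<open>k \<le> B\<close> in auto)
  then obtain x where "k \<le> x" "g x = x" by auto
  with largest_fp(3)[OF cont g0 bounded, of x] k(1) show ?thesis by linarith
qed

lemma largest_fp_mono:
  fixes g h :: "real \<Rightarrow> real"
  assumes "continuous_on UNIV h" "h 0 = 0" and "continuous_on UNIV g" "g 0 = 0"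
    and bounded: "\<And>k. 0 \<le> k \<Longrightarrow> g k \<le> B"
    and le: "\<And>k. 0 \<le> k \<Longrightarrow> h k \<le> g k"
  shows "largest_fp h \<le> largest_fp g"
proof -
  have h_bounded: "h k \<le> B" if "0 \<le> k" for k using le[OF that] bounded[OF that] by linarith
  note fp = largest_fp[OF assms(1,2) h_bounded]
  show ?thesis
    using fp(1,2) le[OF fp(1)] by (intro le_largest_fp[OF assms(3,4) bounded]) auto
qed

lemma one_minus_exp_bounds:
  fixes r k :: real
  assumes "0 \<le> r" "r \<le> 1" "0 \<le> k"
  shows "0 \<le> 1 - exp (- r * k)" and "1 - exp (- r * k) \<le> 1 - exp (- k)"
  using assms mult_right_mono[of r 1 k] by auto

lemma Psi_inf_le_budget_map:
  assumes mu: "\<And>l. l < L \<Longrightarrow> 0 \<le> mu l \<and> mu l \<le> 1"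
    and q: "\<And>l. l < L \<Longrightarrow> 0 \<le> q l \<and> q l \<le> 1"
    and cl: "0 < cl" and fe: "feasible L vbar v va qa" and k: "0 \<le> k"
  shows "Psi_inf L mu q cl v va qa k \<le> vbar * (1 - exp (- k)) / cl"
proof -
  let ?e = "1 - exp (- k)"
  have v: "\<And>l. l < L \<Longrightarrow> 0 \<le> v l" and va: "0 \<le> va" and qa: "0 \<le> qa" "qa \<le> 1"
    and budget: "(\<Sum>l<L. v l) + va \<le> vbar"
    using fe unfolding feasible_def by auto
  have "(\<Sum>l<L. v l * mu l * (1 - exp (- q l * k))) \<le> (\<Sum>l<L. v l * 1 * ?e)"
    using mu q v one_minus_exp_bounds[OF _ _ k]
    by (intro sum_mono mult_mono) (auto simp: mult_nonneg_nonneg)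
  moreover have "va * (1 - exp (- qa * k)) \<le> va * ?e"
    using va one_minus_exp_bounds[OF qa k] by (intro mult_left_mono) auto
  moreover have "cl * Psi_inf L mu q cl v va qa k
      = (\<Sum>l<L. v l * mu l * (1 - exp (- q l * k))) + va * (1 - exp (- qa * k))"
    using cl by (simp add: Psi_inf_def sum_divide_distrib[symmetric] field_simps)
  ultimately have "cl * Psi_inf L mu q cl v va qa k \<le> ((\<Sum>l<L. v l) + va) * ?e"
    by (simp add: sum_distrib_right distrib_right)
  also have "\<dots> \<le> vbar * ?e"
    using budget one_minus_exp_bounds[of 1 k] k by (intro mult_right_mono) auto
  finally show ?thesis using cl by (simp add: field_simps)
qed

lemma kappa_inf_le_kappa_a:
  assumes mu: "\<And>l. l < L \<Longrightarrow> 0 \<le> mu l \<and> mu l \<le> 1"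
    and q: "\<And>l. l < L \<Longrightarrow> 0 \<le> q l \<and> q l \<le> 1"
    and cl: "0 < cl" and vbar: "0 \<le> vbar" and fe: "feasible L vbar v va qa"
  shows "0 \<le> kappa_inf L mu q cl v va qa" and "kappa_inf L mu q cl v va qa \<le> kappa_a vbar cl"
proof -
  let ?g = "\<lambda>k. vbar * (1 - exp (- k)) / cl"
  let ?P = "Psi_inf L mu q cl v va qa"
  have g_bounded: "?g k \<le> vbar / cl" if "0 \<le> k" for k
    using vbar cl by (intro divide_right_mono) (auto intro: mult_left_le)
  have P_le: "?P k \<le> ?g k" if "0 \<le> k" for k
    using Psi_inf_le_budget_map[OF mu q cl fe that] .
  have P_cont: "continuous_on UNIV ?P" and g_cont: "continuous_on UNIV ?g"
    unfolding Psi_inf_def by (intro continuous_intros; use cl in simp)+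
  have "?P 0 = 0" by (simp add: Psi_inf_def)
  then show "0 \<le> kappa_inf L mu q cl v va qa"
    unfolding kappa_inf_def
    using P_le g_bounded by (intro largest_fp(1)[OF P_cont]) (auto intro: order_trans)
  show "kappa_inf L mu q cl v va qa \<le> kappa_a vbar cl"
    unfolding kappa_inf_def kappa_a_def
    by (rule largest_fp_mono[OF P_cont _ g_cont _ g_bounded P_le]) (auto simp: Psi_inf_def)
qed

lemma W_inf_has_derivative:
  "(W_inf L w mu q cl has_real_derivative Omega_inf L w mu q cl x) (at x)"
  unfolding W_inf_def[abs_def] Omega_inf_def
  by (auto intro!: derivative_eq_intros simp: algebra_simps)

lemma Omega_inf_strict_antimono:
  assumes nonneg: "\<And>l. l < L \<Longrightarrow> 0 \<le> w l * mu l \<and> 0 < q l"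
    and pos: "0 < (\<Sum>l<L. w l * mu l * q l)"
    and "x < y"
  shows "Omega_inf L w mu q cl y < Omega_inf L w mu q cl x"
proof -
  have weight_nonneg: "0 \<le> w l * mu l * q l" if "l < L" for l
    using nonneg[OF that] by simp
  obtain l0 where l0: "l0 < L" "0 < w l0 * mu l0 * q l0"
    using pos sum_nonpos[of "{..<L}" "\<lambda>l. w l * mu l * q l"] by (meson lessThan_iff not_le)
  have "(\<Sum>l<L. w l * mu l * q l * exp (- q l * y)) < (\<Sum>l<L. w l * mu l * q l * exp (- q l * x))"
  proof (rule sum_strict_mono_ex1)
    show "\<forall>l\<in>{..<L}. w l * mu l * q l * exp (- q l * y) \<le> w l * mu l * q l * exp (- q l * x)"
      using weight_nonneg nonneg \<open>x < y\<close> by (auto intro!: mult_left_mono)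
    show "\<exists>l\<in>{..<L}. w l * mu l * q l * exp (- q l * y) < w l * mu l * q l * exp (- q l * x)"
      using l0 nonneg[OF l0(1)] \<open>x < y\<close>
      by (intro bexI[of _ l0]) (auto intro: mult_strict_left_mono)
  qed simp
  then show ?thesis unfolding Omega_inf_def by linarith
qed

lemma less_at_min_turning_point:
  fixes f f' :: "real \<Rightarrow> real"
  assumes deriv: "\<And>x. (f has_real_derivative f' x) (at x)"
    and up: "\<And>x. x < t \<Longrightarrow> 0 < f' x" and down: "\<And>x. t < x \<Longrightarrow> f' x < 0"
    and k: "k \<le> b" "k \<noteq> min t b"
  shows "f k < f (min t b)"
proof -
  have cont: "continuous_on S f" for S
    using deriv by (intro continuous_at_imp_continuous_on) (auto intro: DERIV_isCont)
  show ?thesis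
  proof (cases "k < min t b")
    case True
    then show ?thesis
      using deriv up by (intro DERIV_pos_imp_increasing_open[OF _ _ cont]) auto
  next
    case False
    with k have "t < k" "min t b = t" by auto
    then show ?thesis
      using deriv down by (auto intro!: DERIV_neg_imp_decreasing_open[OF _ _ cont])
  qed
qed

theorem theorem3:
  fixes L :: nat and w mu q :: "nat \<Rightarrow> real" and cl vbar kt :: real
  assumes mu: "\<And>l. l < L \<Longrightarrow> 0 < mu l \<and> mu l \<le> 1"
    and q: "\<And>l. l < L \<Longrightarrow> 0 < q l \<and> q l \<le> 1"
    and w: "\<And>l. l < L \<Longrightarrow> 0 \<le> w l"
    and cl: "0 < cl"
    and vbar: "cl \<le> vbar"
    and wsum: "cl \<le> (\<Sum>l<L. w l * mu l * q l)"
    and kt: "0 \<le> kt" "Omega_inf L w mu q cl kt = 0"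
  shows "let ks = min kt (kappa_a vbar cl) in
           0 \<le> ks \<and> ks \<le> kappa_a vbar cl
         \<and> (\<forall>k. 0 \<le> k \<and> k \<le> kappa_a vbar cl \<and> k \<noteq> ks \<longrightarrow>
               W_inf L w mu q cl k < W_inf L w mu q cl ks)
         \<and> (\<forall>v va qa. feasible L vbar v va qa \<and> kappa_inf L mu q cl v va qa = ks \<longrightarrow>
               optimal_prizes L w mu q cl vbar v va qa)"
proof -
  define ks where "ks = min kt (kappa_a vbar cl)"
  let ?W = "W_inf L w mu q cl"
  have mu': "\<And>l. l < L \<Longrightarrow> 0 \<le> mu l \<and> mu l \<le> 1"
    and q': "\<And>l. l < L \<Longrightarrow> 0 \<le> q l \<and> q l \<le> 1"
    using mu q by force+
  have kappa_inf_range: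
      "0 \<le> kappa_inf L mu q cl v va qa \<and> kappa_inf L mu q cl v va qa \<le> kappa_a vbar cl"
    if "feasible L vbar v va qa" for v va qa
    using kappa_inf_le_kappa_a[OF mu' q' cl _ that] cl vbar by auto
  have "feasible L vbar (\<lambda>_. 0) 0 0" using cl vbar by (simp add: feasible_def)
  then have "0 \<le> kappa_a vbar cl" using kappa_inf_range by (meson order_trans)
  then have ks_range: "0 \<le> ks" "ks \<le> kappa_a vbar cl" using kt(1) unfolding ks_def by auto
  have Omega_antimono: "x < y \<Longrightarrow> Omega_inf L w mu q cl y < Omega_inf L w mu q cl x" for x y
    using mu q w cl wsum by (intro Omega_inf_strict_antimono) (auto simp: less_imp_le)
  have best: "?W k < ?W ks" if "k \<le> kappa_a vbar cl" "k \<noteq> ks" for k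
    unfolding ks_def
    by (rule less_at_min_turning_point[OF W_inf_has_derivative _ _ that[unfolded ks_def]])
      (use Omega_antimono kt(2) in force)+
  have "optimal_prizes L w mu q cl vbar v va qa"
    if "feasible L vbar v va qa" "kappa_inf L mu q cl v va qa = ks" for v va qa
    using that kappa_inf_range best unfolding optimal_prizes_def
    by (metis order.strict_implies_order order_refl)
  then show ?thesis
    unfolding Let_def ks_def[symmetric] using ks_range best by blast
qed

end
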